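(* Fix any $\lambda\in[0,\infty)$ and $i\in[n]$. If $\ell(z_i,\cdot)$ is differentiable and $m(P_{-i},\cdot,\lambda)$ has $\nu(r)=c_mr^q$ gradient growth for some $c_m>0$ and $q>0$, then $$\|\hat\beta(\lambda)-\hat\beta_{-i}(\lambda)\|_2^{q-1}\le\frac1n\frac1{c_m}\|\nabla_\beta\ell(z_i,\hat\beta(\lambda))\|_2.$$
   Context: Data $z_1,\dots,z_n\in\mathcal Z$; loss $\ell:\mathcal Z\times\mathbb{R}^d\to\mathbb{R}$, regularizer $\pi:\mathbb{R}^d\to\mathbb{R}$. $\ell(\mu,\beta):=\int\ell(z,\beta)d\mu(z)$, $m(\mu,\beta,\lambda):=\ell(\mu,\beta)+\lambda\pi(\beta)$; $P_n:=\frac1n\sum_i\delta_{z_i}$, $P_{-i}:=\frac1n\sum_{j\ne i}\delta_{z_j}$. $\hat\beta(\lambda):=\arg\min_\beta m(P_n,\beta,\lambda)$, $\hat\beta_{-i}(\lambda):=\arg\min_\beta m(P_{-i},\beta,\lambda)$. A function $\varphi$ has $\nu$ gradient growth if it is subdifferentiable and $\nu(\|x-y\|_2)\le\langle y-x,u-v\rangle$ for all $x,y\in\mathbb{R}^d$ and all $u\in\partial\varphi(y)$, $v\in\partial\varphi(x)$. *)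

theory Defs
  imports "HOL-Analysis.Analysis"
begin

definition subdiff :: "('b::real_inner \<Rightarrow> real) \<Rightarrow> 'b \<Rightarrow> 'b set" where
  "subdiff \<phi> y = {u. \<forall>x. \<phi> x \<ge> \<phi> y + inner u (x - y)}"

definition subdifferentiable :: "('b::real_inner \<Rightarrow> real) \<Rightarrow> bool" where
  "subdifferentiable \<phi> \<longleftrightarrow> (\<forall>x. subdiff \<phi> x \<noteq> {})"

definition gradient_growth :: "(real \<Rightarrow> real) \<Rightarrow> ('b::real_inner \<Rightarrow> real) \<Rightarrow> bool" where
  "gradient_growth \<nu> \<phi> \<longleftrightarrow> subdifferentiable \<phi> \<and>
     (\<forall>x y u v. u \<in> subdiff \<phi> y \<longrightarrow> v \<in> subdiff \<phi> x \<longrightarrow> \<nu> (norm (x - y)) \<le> inner (y - x) (u - v))"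

definition m_full :: "('z \<Rightarrow> 'b \<Rightarrow> real) \<Rightarrow> ('b \<Rightarrow> real) \<Rightarrow> (nat \<Rightarrow> 'z) \<Rightarrow> nat \<Rightarrow> 'b \<Rightarrow> real \<Rightarrow> real" where
  "m_full loss pen z n \<beta> lam = (1 / real n) * (\<Sum>j\<in>{1..n}. loss (z j) \<beta>) + lam * pen \<beta>"

text \<open>Leave-one-out risk m(P_{-i}, beta, lambda); note P_{-i} has weights 1/n.\<close>
definition m_loo :: "('z \<Rightarrow> 'b \<Rightarrow> real) \<Rightarrow> ('b \<Rightarrow> real) \<Rightarrow> (nat \<Rightarrow> 'z) \<Rightarrow> nat \<Rightarrow> nat \<Rightarrow> 'b \<Rightarrow> real \<Rightarrow> real" where
  "m_loo loss pen z n i \<beta> lam = (1 / real n) * (\<Sum>j\<in>{1..n} - {i}. loss (z j) \<beta>) + lam * pen \<beta>"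

end

theory Submission
  imports Defs
begin

text \<open>Write \<open>f\<close> for the leave-one-out objective and \<open>g\<close> for the loss at \<open>z\<^sub>i\<close>, so that
  the full objective is \<open>f + g / n\<close>. A function with nonempty subdifferentials everywhere is
  convex, so the first-order condition at the full minimiser \<open>\<beta>\<close> puts \<open>-\<nabla>g(\<beta>) / n\<close> into
  \<open>\<partial>f(\<beta>)\<close>, while \<open>0 \<in> \<partial>f(\<beta>\<^sub>-\<^sub>i)\<close> at the leave-one-out minimiser. Applying the growth
  condition to these two subgradients and Cauchy-Schwarz gives
  \<open>c r\<^sup>q \<le> r \<parallel>\<nabla>g(\<beta>)\<parallel> / n\<close> for \<open>r = \<parallel>\<beta> - \<beta>\<^sub>-\<^sub>i\<parallel>\<close>; divide by \<open>c r\<close>.\<close>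

lemma subdiff_zero_iff_minimizer: "0 \<in> subdiff f b \<longleftrightarrow> (\<forall>x. f b \<le> f x)"
  by (simp add: subdiff_def)

lemma subdifferentiable_imp_convex_on:
  fixes f :: "'b::real_inner \<Rightarrow> real"
  assumes "subdifferentiable f"
  shows "convex_on UNIV f"
proof (rule convex_onI)
  fix t :: real and x y :: 'b
  assume t: "0 < t" "t < 1"
  let ?w = "(1 - t) *\<^sub>R x + t *\<^sub>R y"
  obtain u where "u \<in> subdiff f ?w"
    using assms unfolding subdifferentiable_def by blast
  then have x: "f x \<ge> f ?w + inner u (x - ?w)" and y: "f y \<ge> f ?w + inner u (y - ?w)"
    unfolding subdiff_def by blast+
  have "(1 - t) * inner u (x - ?w) + t * inner u (y - ?w) = 0"
    by (simp add: inner_diff_right algebra_simps)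
  moreover have "(1 - t) * f x \<ge> (1 - t) * (f ?w + inner u (x - ?w))"
    using x t by (intro mult_left_mono) auto
  moreover have "t * f y \<ge> t * (f ?w + inner u (y - ?w))"
    using y t by (intro mult_left_mono) auto
  ultimately show "f ?w \<le> (1 - t) * f x + t * f y"
    by (simp add: algebra_simps)
qed simp

lemma gderiv_difference_quotient_tendsto:
  fixes g :: "'b::real_inner \<Rightarrow> real"
  assumes "GDERIV g b :> D"
  shows "((\<lambda>t. (g (b + t *\<^sub>R h) - g b) / t) \<longlongrightarrow> inner D h) (at 0)"
proof -
  have g: "(g has_derivative (\<lambda>k. inner k D)) (at (b + 0 *\<^sub>R h))"
    using assms by (simp add: gderiv_def)
  have line: "((\<lambda>t. b + t *\<^sub>R h) has_derivative (\<lambda>t. t *\<^sub>R h)) (at 0)"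
    by (auto intro!: derivative_eq_intros)
  have "((\<lambda>t. g (b + t *\<^sub>R h)) has_derivative (\<lambda>t. inner D h * t)) (at 0)"
    using has_derivative_compose[OF line g] by (simp add: o_def inner_commute mult.commute)
  then have "((\<lambda>t. g (b + t *\<^sub>R h)) has_field_derivative inner D h) (at 0)"
    by (simp add: has_field_derivative_def)
  then show ?thesis
    by (simp add: DERIV_def)
qed

lemma minimizer_convex_plus_gderiv_imp_subdiff:
  fixes f g :: "'b::real_inner \<Rightarrow> real"
  assumes f: "convex_on UNIV f" and g: "GDERIV g b :> D"
    and min: "\<forall>x. f b + g b \<le> f x + g x"
  shows "- D \<in> subdiff f b"
  unfolding subdiff_def
proof clarify
  fix x
  let ?q = "\<lambda>t. f x - f b + (g (b + t *\<^sub>R (x - b)) - g b) / t"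
  have "0 \<le> ?q t" if t: "0 < t" "t \<le> 1" for t
  proof -
    have "f b + g b \<le> f (b + t *\<^sub>R (x - b)) + g (b + t *\<^sub>R (x - b))"
      using min by blast
    also have "b + t *\<^sub>R (x - b) = (1 - t) *\<^sub>R b + t *\<^sub>R x"
      by (simp add: algebra_simps)
    also have "f \<dots> \<le> (1 - t) * f b + t * f x"
      using convex_onD[OF f, of t b x] t by simp
    finally have "0 \<le> t * (f x - f b) + (g (b + t *\<^sub>R (x - b)) - g b)"
      by (simp add: algebra_simps)
    then have "0 \<le> (t * (f x - f b) + (g (b + t *\<^sub>R (x - b)) - g b)) / t"
      using t by simp
    also have "\<dots> = ?q t"
      using t by (simp add: field_simps)
    finally show ?thesis .
  qed
  then have "\<forall>\<^sub>F t in at_right 0. 0 \<le> ?q t"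
    unfolding eventually_at_right_field by (intro exI[of _ 1]) auto
  moreover have "(?q \<longlongrightarrow> f x - f b + inner D (x - b)) (at_right 0)"
    using gderiv_difference_quotient_tendsto[OF g, of "x - b"]
    by (intro tendsto_intros) (simp add: filterlim_at_split)
  ultimately have "0 \<le> f x - f b + inner D (x - b)"
    by (simp add: tendsto_lowerbound)
  then show "f b + inner (- D) (x - b) \<le> f x"
    by simp
qed

text \<open>At \<open>x = y\<close> the bound holds for every exponent since \<open>0 powr p = 0\<close>, even for \<open>p < 0\<close>.\<close>

lemma gradient_growth_powr_imp_dist_powr_le:
  fixes f :: "'b::real_inner \<Rightarrow> real"
  assumes growth: "gradient_growth (\<lambda>r. c * r powr q) f"
    and u: "u \<in> subdiff f y" and v: "v \<in> subdiff f x"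
  shows "c * norm (y - x) powr (q - 1) \<le> norm (u - v)"
proof (cases "x = y")
  case False
  define r where "r = norm (y - x)"
  have r: "r > 0"
    using False by (simp add: r_def)
  have "r * (c * r powr (q - 1)) = c * r powr q"
    using r by (simp add: powr_diff)
  also have "\<dots> \<le> inner (y - x) (u - v)"
    using growth u v unfolding gradient_growth_def r_def by (simp add: norm_minus_commute)
  also have "\<dots> \<le> r * norm (u - v)"
    unfolding r_def by (metis Cauchy_Schwarz_ineq2 abs_le_D1)
  finally show ?thesis
    using r unfolding r_def by simp
qed simp

lemma m_full_eq_m_loo_plus_loss:
  assumes "i \<in> {1..n}"
  shows "m_full loss pen z n \<beta> lam = m_loo loss pen z n i \<beta> lam + loss (z i) \<beta> / real n"
proof -
  have "(\<Sum>j\<in>{1..n}. loss (z j) \<beta>) = loss (z i) \<beta> + (\<Sum>j\<in>{1..n} - {i}. loss (z j) \<beta>)"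
    using assms by (simp add: sum.remove)
  then show ?thesis
    unfolding m_full_def m_loo_def by (simp add: add_divide_distrib)
qed

theorem lemma3:
  fixes loss :: "'z \<Rightarrow> 'b::euclidean_space \<Rightarrow> real" and pen :: "'b \<Rightarrow> real"
    and z :: "nat \<Rightarrow> 'z" and n i :: nat and lam c q :: real
    and bhat bloo D :: 'b
  assumes "lam \<ge> 0" and "i \<in> {1..n}"
    and bhat: "\<forall>\<beta>. m_full loss pen z n bhat lam \<le> m_full loss pen z n \<beta> lam"
    and bloo: "\<forall>\<beta>. m_loo loss pen z n i bloo lam \<le> m_loo loss pen z n i \<beta> lam"
    and diff: "\<forall>\<beta>. loss (z i) differentiable (at \<beta>)"
    and grad: "GDERIV (loss (z i)) bhat :> D"
    and "c > 0" and "q > 0"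
    and growth: "gradient_growth (\<lambda>r. c * r powr q) (\<lambda>\<beta>. m_loo loss pen z n i \<beta> lam)"
  shows "norm (bhat - bloo) powr (q - 1) \<le> (1 / real n) * (1 / c) * norm D"
proof -
  define f where "f = (\<lambda>\<beta>. m_loo loss pen z n i \<beta> lam)"
  have n: "real n > 0"
    using \<open>i \<in> {1..n}\<close> by auto
  have "convex_on UNIV f"
    using growth subdifferentiable_imp_convex_on unfolding gradient_growth_def f_def by blast
  moreover have "GDERIV (\<lambda>\<beta>. loss (z i) \<beta> / real n) bhat :> D /\<^sub>R real n"
    using grad unfolding gderiv_def by (auto intro!: derivative_eq_intros simp: divide_inverse)
  moreover have "\<forall>x. f bhat + loss (z i) bhat / real n \<le> f x + loss (z i) x / real n"
    using bhat m_full_eq_m_loo_plus_loss[OF \<open>i \<in> {1..n}\<close>] unfolding f_def by metis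
  ultimately have u: "- (D /\<^sub>R real n) \<in> subdiff f bhat"
    by (rule minimizer_convex_plus_gderiv_imp_subdiff)
  have v: "0 \<in> subdiff f bloo"
    using bloo subdiff_zero_iff_minimizer unfolding f_def by blast
  have "c * norm (bhat - bloo) powr (q - 1) \<le> norm D / real n"
    using gradient_growth_powr_imp_dist_powr_le[OF growth[folded f_def] u v] n by (simp add: field_simps)
  then have "norm (bhat - bloo) powr (q - 1) \<le> norm D / real n / c"
    using \<open>c > 0\<close> by (metis mult.commute pos_le_divide_eq)
  then show ?thesis
    by simp
qed

end
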